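(* Let $G$ be a connected solvable Lie group, $U=\mathbb C^n$, and let $\rho:G\to GL(n,\mathbb C)$ be a representation of $G$ on $U$. Then any complex linear subspace $V\subset U$ which is universal in $U$ is equal to $U$.
   Context: $V$ is universal in $U$ if for every $u\in U$ there exists $g\in G$ with $\rho(g)u\in V$. *)

theory Defs
  imports "HOL-Analysis.Analysis" "HOL-Algebra.Solvable_Groups"
begin

text \<open>The general linear group GL(n, k) realised on matrices indexed by a finite type 'n
  (so n = CARD('n)), as a HOL-Algebra monoid.\<close>
definition GL :: "('a::field ^'n^'n) monoid" where
  "GL = \<lparr>carrier = {A. invertible A}, mult = (**), one = mat 1\<rparr>"

definition topological_group :: "('g, 'b) monoid_scheme \<Rightarrow> 'g topology \<Rightarrow> bool" where
  "topological_group G T \<longleftrightarrow> group G \<and> topspace T = carrier G \<and>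
     continuous_map (prod_topology T T) T (\<lambda>(x, y). x \<otimes>\<^bsub>G\<^esub> y) \<and>
     continuous_map T T (\<lambda>x. inv\<^bsub>G\<^esub> x)"

definition universal_in ::
  "('g, 'b) monoid_scheme \<Rightarrow> ('g \<Rightarrow> 'a::semiring_1^'n^'n) \<Rightarrow> ('a^'n) set \<Rightarrow> ('a^'n) set \<Rightarrow> bool" where
  "universal_in G \<rho> U V \<longleftrightarrow> (\<forall>u\<in>U. \<exists>g\<in>carrier G. \<rho> g *v u \<in> V)"

end

theory Submission
  imports Defs "HOL-Computational_Algebra.Fundamental_Theorem_Algebra"
begin

(* By a relative Lie-Kolchin theorem, the connected solvable group G has a common eigenvector w
   modulo every proper rho(G)-invariant subspace Z: rho(g) w = c w + z with z in Z for all g.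
   If Z is contained in V, pick g with rho(g) w in V; since rho(g) is invertible, c is nonzero,
   hence w lies in V and Z + span w is a larger invariant subspace inside V. Starting from {0},
   this exhausts the whole space.
   The Lie-Kolchin step goes by induction on the derived length. A common eigenvector w of the derived
   subgroup K' modulo Z gives a continuous eigenvalue function kappa on K'. Conjugating by a in K moves
   eigenvectors of k to eigenvectors of a^-1 k a with the same eigenvalue; a continuous function on a
   connected set with values in the finite spectrum of rho(k) is constant, so kappa is conjugation
   invariant and its weight space is K-invariant. On that space commutators act as scalars modulo Z,
   and an induction on the dimension, using the same continuity argument, finds a common eigenvector
   of K. *)

section \<open>Polynomials in a matrix acting on vectors\<close>

definition matrix_poly_apply :: "'a::field^'n^'n \<Rightarrow> 'a poly \<Rightarrow> 'a^'n \<Rightarrow> 'a^'n" where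
  "matrix_poly_apply B p = fold_coeffs (\<lambda>a f v. a *s v + B *v f v) p (\<lambda>v. 0)"

lemma matrix_poly_apply_0 [simp]: "matrix_poly_apply B 0 v = 0"
  by (simp add: matrix_poly_apply_def)

lemma matrix_poly_apply_pCons [simp]:
  "matrix_poly_apply B (pCons a p) v = a *s v + B *v matrix_poly_apply B p v"
  by (cases "p = 0 \<and> a = 0") (auto simp: matrix_poly_apply_def)

lemma linear_matrix_poly_apply: "Vector_Spaces.linear (*s) (*s) (matrix_poly_apply B p)"
proof (induction p)
  case 0
  show ?case by (simp add: vec.linear_zero)
next
  case (pCons a p)
  have "matrix_poly_apply B (pCons a p) = (\<lambda>v. a *s v + ((*v) B \<circ> matrix_poly_apply B p) v)"
    by (simp add: fun_eq_iff)
  then show ?case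
    by (simp only:) (intro vec.linear_compose_add vec.linear_scale_self
        Vector_Spaces.linear_compose[OF pCons.IH matrix_vector_mul_linear_gen])
qed

lemma matrix_poly_apply_zero_vector [simp]: "matrix_poly_apply B p 0 = 0"
  by (rule vec.linear_0[OF linear_matrix_poly_apply])

lemma matrix_poly_apply_add: "matrix_poly_apply B (p + q) v = matrix_poly_apply B p v + matrix_poly_apply B q v"
proof (induction p q rule: poly_induct2)
  case (pCons a p b q)
  then show ?case
    by (simp add: add_pCons vector_sadd_rdistrib matrix_vector_right_distrib algebra_simps)
qed simp

lemma matrix_poly_apply_diff: "matrix_poly_apply B (p - q) v = matrix_poly_apply B p v - matrix_poly_apply B q v"
  using matrix_poly_apply_add[of B "p - q" q v] by simp

lemma matrix_poly_apply_sum: "matrix_poly_apply B (sum f S) v = (\<Sum>i\<in>S. matrix_poly_apply B (f i) v)"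
  by (induction S rule: infinite_finite_induct) (simp_all add: matrix_poly_apply_add)

lemma matrix_poly_apply_smult: "matrix_poly_apply B (smult c p) v = c *s matrix_poly_apply B p v"
  by (induction p) (simp_all add: vec.scale vec.scale_right_distrib vec.scale_scale)

lemma matrix_poly_apply_mult: "matrix_poly_apply B (p * q) v = matrix_poly_apply B p (matrix_poly_apply B q v)"
  by (induction p) (simp_all add: matrix_poly_apply_add matrix_poly_apply_smult)

lemma matrix_poly_apply_monom: "matrix_poly_apply B (monom a k) v = a *s ((*v) B ^^ k) v"
  by (induction k) (simp_all add: monom_Suc monom_0 vec.scale)

lemma matrix_poly_apply_linear_factor: "matrix_poly_apply B [:-c, 1:] v = B *v v - c *s v"
  by (simp add: vec.scale_minus_left)

lemma matrix_poly_apply_closed: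
  assumes "vec.subspace U" "(*v) B ` U \<subseteq> U" "v \<in> U"
  shows "matrix_poly_apply B p v \<in> U"
  using assms by (induction p) (auto intro!: vec.subspace_add vec.subspace_scale vec.subspace_0)

lemma annihilating_poly_vector_exists:
  fixes B :: "'a::field^'n^'n"
  obtains p where "p \<noteq> 0" "matrix_poly_apply B p u = 0"
proof -
  define f where "f i = ((*v) B ^^ i) u" for i
  define N where "N = CARD('n)"
  show ?thesis
  proof (cases "inj_on f {0..N}")
    case False
    then obtain i j where ij: "i < j" "f i = f j"
      unfolding inj_on_def by (metis linorder_neqE_nat)
    define p where "p = monom (1::'a) j - monom 1 i"
    have "coeff p j = 1" using ij by (simp add: p_def coeff_monom)
    then have "p \<noteq> 0" by auto
    moreover have "matrix_poly_apply B p u = 0"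
      using ij by (simp add: p_def matrix_poly_apply_diff matrix_poly_apply_monom f_def)
    ultimately show ?thesis by (rule that)
  next
    case True
    define S where "S = f ` {0..N}"
    have "card S = N + 1" using True by (simp add: S_def card_image)
    then have "vec.dependent S"
      using vec.independent_bound_general[of S] vec.dim_subset_UNIV[of S]
      by (auto simp: vec.dimension_def card_cart_basis N_def)
    then obtain c where c: "\<exists>v\<in>S. c v \<noteq> 0" "(\<Sum>v\<in>S. c v *s v) = 0"
      using vec.dependent_finite[of S] by (auto simp: S_def)
    define p where "p = (\<Sum>i\<in>{0..N}. monom (c (f i)) i)"
    from c(1) obtain i0 where i0: "i0 \<in> {0..N}" "c (f i0) \<noteq> 0" by (auto simp: S_def)
    have "coeff p i0 = c (f i0)"
      using i0 by (simp add: p_def coeff_sum coeff_monom)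
    then have "p \<noteq> 0" using i0 by auto
    moreover have "matrix_poly_apply B p u = (\<Sum>v\<in>S. c v *s v)"
      using sum.reindex[OF True, of "\<lambda>v. c v *s v"]
      by (simp add: p_def S_def matrix_poly_apply_sum matrix_poly_apply_monom f_def)
    ultimately show ?thesis using c(2) that by simp
  qed
qed

lemma annihilating_poly_exists:
  fixes B :: "'a::field^'n^'n"
  obtains p where "p \<noteq> 0" "\<And>v. matrix_poly_apply B p v = 0"
proof -
  have "\<forall>i. \<exists>p. p \<noteq> 0 \<and> matrix_poly_apply B p (axis i 1) = 0"
    using annihilating_poly_vector_exists by metis
  then obtain P where P: "\<And>i. P i \<noteq> 0" "\<And>i. matrix_poly_apply B (P i) (axis i 1) = 0"
    by metis
  define p where "p = (\<Prod>i\<in>UNIV. P i)"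
  have axis: "matrix_poly_apply B p (axis i 1) = 0" for i
  proof -
    have "p = (\<Prod>j\<in>UNIV - {i}. P j) * P i"
      unfolding p_def by (metis finite UNIV_I mult.commute prod.remove)
    then show ?thesis by (simp add: matrix_poly_apply_mult P(2))
  qed
  have "matrix_poly_apply B p v = 0" for v
  proof -
    have "matrix_poly_apply B p v = matrix_poly_apply B p (\<Sum>i\<in>UNIV. v $ i *s axis i 1)"
      by (simp add: basis_expansion)
    also have "\<dots> = 0"
      by (simp add: vec.linear_sum[OF linear_matrix_poly_apply]
          vec.linear_scale[OF linear_matrix_poly_apply] axis)
    finally show ?thesis .
  qed
  moreover have "p \<noteq> 0" using P(1) by (simp add: p_def)
  ultimately show ?thesis using that by blast
qed

section \<open>Subspaces and eigenvectors modulo a subspace\<close>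

lemma subspace_scale_iff:
  fixes Z :: "('a::field^'n) set"
  assumes "vec.subspace Z" "c \<noteq> 0"
  shows "c *s x \<in> Z \<longleftrightarrow> x \<in> Z"
  using assms vec.subspace_scale[OF assms(1), of "c *s x" "inverse c"]
  by (auto simp: vec.scale_scale intro: vec.subspace_scale)

lemma subspace_dim_less:
  fixes E U :: "('a::field^'n) set"
  assumes "vec.subspace E" "vec.subspace U" "E \<subset> U"
  shows "vec.dim E < vec.dim U"
proof -
  have span_E: "vec.span E = E" and span_U: "vec.span U = U"
    using assms(1,2) by (simp_all only: vec.span_eq_iff)
  show ?thesis
    using vec.dim_psubset[of E U] assms(3) unfolding span_E span_U by blast
qed

lemma subspace_chain_reaches_UNIV:
  fixes P :: "('a::field^'n) set \<Rightarrow> bool"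
  assumes subspace: "\<And>Z. P Z \<Longrightarrow> vec.subspace Z"
    and extend: "\<And>Z. P Z \<Longrightarrow> Z \<noteq> UNIV \<Longrightarrow> \<exists>Z'. P Z' \<and> Z \<subset> Z'"
    and "P Z"
  shows "P UNIV"
  using \<open>P Z\<close>
proof (induction "CARD('n) - vec.dim Z" arbitrary: Z rule: less_induct)
  case less
  show ?case
  proof (cases "Z = UNIV")
    case True
    with less.prems show ?thesis by simp
  next
    case False
    then obtain Z' where Z': "P Z'" "Z \<subset> Z'"
      using extend less.prems by blast
    then have "vec.dim Z < vec.dim Z'"
      using subspace_dim_less subspace less.prems by blast
    moreover have "vec.dim Z' \<le> CARD('n)"
      using vec.dim_subset_UNIV[of Z'] by (simp add: vec.dimension_def card_cart_basis)
    ultimately have "CARD('n) - vec.dim Z' < CARD('n) - vec.dim Z"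
      by linarith
    then show ?thesis
      using less.hyps Z'(1) by blast
  qed
qed

text \<open>The functional is given by explicit coordinates so that it is visibly continuous.\<close>

lemma separating_functional_exists:
  fixes Z :: "('a::field^'n) set"
  assumes Z: "vec.subspace Z" and w: "w \<notin> Z"
  shows "\<exists>d. (\<forall>z\<in>Z. (\<Sum>i\<in>UNIV. z $ i * d i) = 0) \<and> (\<Sum>i\<in>UNIV. w $ i * d i) = 1"
proof -
  obtain B where B: "B \<subseteq> Z" "vec.independent B" "Z \<subseteq> vec.span B"
    by (rule vec.basis_exists[of Z]) blast
  have "w \<notin> vec.span B"
    using vec.span_minimal[OF B(1) Z] w by blast
  then have indep: "vec.independent (insert w B)"
    using vec.independent_insertI B(2) by blast
  define L where "L = vec.construct (insert w B) (\<lambda>b. if b = w then w else 0)"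
  have lin: "Vector_Spaces.linear (*s) (*s) L"
    unfolding L_def by (rule vec.linear_construct[OF indep])
  have Lw: "L w = w"
    unfolding L_def using vec.construct_basis[OF indep insertI1, of "\<lambda>b. if b = w then w else 0"] by simp
  have "L b = 0" if "b \<in> B" for b
    unfolding L_def
    using vec.construct_basis[OF indep insertI2[OF that], of "\<lambda>b. if b = w then w else 0"] that B(1) w
    by auto
  then have LZ: "L z = 0" if "z \<in> Z" for z
    using vec.linear_eq_0_on_span[OF lin] that B(3) by blast
  have "w \<noteq> 0" using w vec.subspace_0[OF Z] by blast
  then obtain j where j: "w $ j \<noteq> 0" using vec_eq_iff[of w 0] by auto
  define d where "d i = L (axis i 1) $ j / w $ j" for i
  have L_coord: "(\<Sum>i\<in>UNIV. x $ i * d i) = L x $ j / w $ j" for x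
  proof -
    have "L x = (\<Sum>i\<in>UNIV. x $ i *s L (axis i 1))"
      by (subst basis_expansion[symmetric, of x])
        (simp add: vec.linear_sum[OF lin] vec.linear_scale[OF lin])
    then show ?thesis by (simp add: d_def sum_component sum_divide_distrib)
  qed
  show ?thesis
    by (rule exI[of _ d]) (simp add: L_coord LZ Lw j)
qed

text \<open>Eigenvectors of the map induced by \<open>B\<close> on the quotient by \<open>Z\<close>; working modulo \<open>Z\<close>
  avoids quotient spaces.\<close>

definition eigenspace_mod :: "('a::field^'n) set \<Rightarrow> 'a^'n^'n \<Rightarrow> 'a \<Rightarrow> ('a^'n) set" where
  "eigenspace_mod Z B c = {x. B *v x - c *s x \<in> Z}"

lemma subspace_eigenspace_mod:
  assumes "vec.subspace Z"
  shows "vec.subspace (eigenspace_mod Z B c)"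
proof -
  have "Vector_Spaces.linear (*s) (*s) (\<lambda>x. B *v x - c *s x)"
    by (intro vec.linear_compose_sub matrix_vector_mul_linear_gen vec.linear_scale_self)
  then show ?thesis
    unfolding eigenspace_mod_def using assms by (rule vec.linear_subspace_linear_preimage)
qed

lemma subset_eigenspace_mod:
  assumes "vec.subspace Z" "(*v) B ` Z \<subseteq> Z"
  shows "Z \<subseteq> eigenspace_mod Z B c"
  using assms by (auto simp: eigenspace_mod_def intro!: vec.subspace_diff vec.subspace_scale)

lemma eigenspace_mod_identity:
  assumes "vec.subspace Z" "w \<notin> Z" "w \<in> eigenspace_mod Z (mat 1) c"
  shows "c = 1"
proof -
  have "(1 - c) *s w \<in> Z"
    using assms(3) by (simp add: eigenspace_mod_def vec.scale_left_diff_distrib)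
  then show ?thesis
    using subspace_scale_iff[OF assms(1), of "1 - c" w] assms(2) by auto
qed

lemma eigenspace_mod_intertwine:
  assumes "(*v) A ` Z \<subseteq> Z" "A ** B' = B ** A" "u \<in> eigenspace_mod Z B' c"
  shows "A *v u \<in> eigenspace_mod Z B c"
proof -
  have "B *v (A *v u) - c *s (A *v u) = A *v (B' *v u - c *s u)"
    by (simp add: vec.diff vec.scale matrix_vector_mul_assoc assms(2))
  then show ?thesis
    using assms(1,3) by (auto simp: eigenspace_mod_def)
qed

lemma eigenspace_mod_mult:
  assumes "vec.subspace Z" "(*v) B ` Z \<subseteq> Z"
    and "u \<in> eigenspace_mod Z B b" "u \<in> eigenspace_mod Z D d"
  shows "u \<in> eigenspace_mod Z (B ** D) (b * d)"
proof -
  have "(B ** D) *v u - (b * d) *s u = B *v (D *v u - d *s u) + d *s (B *v u - b *s u)"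
    by (simp add: vec.diff vec.scale matrix_vector_mul_assoc[symmetric] vec.scale_scale
        vec.scale_right_diff_distrib algebra_simps)
  also have "\<dots> \<in> Z"
  proof (rule vec.subspace_add[OF assms(1)])
    show "B *v (D *v u - d *s u) \<in> Z"
      using assms(2,4) by (auto simp: eigenspace_mod_def)
    show "d *s (B *v u - b *s u) \<in> Z"
      using assms(3) unfolding eigenspace_mod_def by (blast intro: vec.subspace_scale[OF assms(1)])
  qed
  finally show ?thesis by (simp add: eigenspace_mod_def)
qed

lemma matrix_poly_apply_eigenspace_mod:
  assumes Z: "vec.subspace Z" "(*v) B ` Z \<subseteq> Z" and x: "x \<in> eigenspace_mod Z B c"
  shows "matrix_poly_apply B p x - poly p c *s x \<in> Z"
proof (induction p)
  case 0
  show ?case using vec.subspace_0[OF Z(1)] by simp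
next
  case (pCons a p)
  define z where "z = matrix_poly_apply B p x - poly p c *s x"
  have "matrix_poly_apply B (pCons a p) x - poly (pCons a p) c *s x
        = poly p c *s (B *v x - c *s x) + B *v z"
    unfolding z_def
    by (simp add: vec.scale matrix_vector_right_distrib vec.scale_scale vec.scale_right_diff_distrib
        algebra_simps)
  also have "\<dots> \<in> Z"
  proof (rule vec.subspace_add[OF Z(1)])
    show "poly p c *s (B *v x - c *s x) \<in> Z"
      using x unfolding eigenspace_mod_def by (blast intro: vec.subspace_scale[OF Z(1)])
    show "B *v z \<in> Z"
      using pCons.IH Z(2) by (auto simp: z_def)
  qed
  finally show ?case .
qed

lemma finite_eigenvalues_mod:
  assumes Z: "vec.subspace Z" "(*v) B ` Z \<subseteq> Z"
  shows "finite {c. \<not> eigenspace_mod Z B c \<subseteq> Z}"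
proof -
  obtain P where P: "P \<noteq> 0" "\<And>v. matrix_poly_apply B P v = 0"
    using annihilating_poly_exists[where B = B] by blast
  have "poly P c = 0" if "\<not> eigenspace_mod Z B c \<subseteq> Z" for c
  proof -
    from that obtain x where x: "x \<in> eigenspace_mod Z B c" "x \<notin> Z" by blast
    have "- (poly P c *s x) \<in> Z"
      using matrix_poly_apply_eigenspace_mod[OF Z x(1), of P] by (simp add: P(2))
    then have "poly P c *s x \<in> Z"
      using vec.subspace_neg[OF Z(1)] by fastforce
    then show ?thesis using subspace_scale_iff[OF Z(1)] x(2) by blast
  qed
  then have "{c. \<not> eigenspace_mod Z B c \<subseteq> Z} \<subseteq> {c. poly P c = 0}"
    by blast
  then show ?thesis using poly_roots_finite[OF P(1)] by (rule finite_subset)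
qed

lemma eigenvector_mod_exists_poly:
  fixes B :: "complex^'n^'n"
  assumes Z: "vec.subspace Z" and U: "vec.subspace U" "(*v) B ` U \<subseteq> U" and u: "u \<in> U" "u \<notin> Z"
    and p: "p \<noteq> 0" "matrix_poly_apply B p u \<in> Z"
  shows "\<exists>c. \<exists>w\<in>U. w \<notin> Z \<and> w \<in> eigenspace_mod Z B c"
  using p
proof (induction "degree p" arbitrary: p rule: less_induct)
  case less
  show ?case
  proof (cases "degree p = 0")
    case True
    then obtain a where "p = [:a:]" "a \<noteq> 0"
      using less.prems by (metis degree_eq_zeroE pCons_0_0)
    then show ?thesis
      using less.prems(2) u subspace_scale_iff[OF Z] by simp
  next
    case False
    then have "\<not> constant (poly p)"
      by (simp add: constant_degree)
    then obtain r where "poly p r = 0"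
      using fundamental_theorem_of_algebra by blast
    then obtain q where q: "p = [:-r, 1:] * q"
      by (metis dvdE poly_eq_0_iff_dvd)
    with less.prems have "q \<noteq> 0" by auto
    have "degree p = degree [:-r, 1:] + degree q"
      unfolding q by (rule degree_mult_eq) (use \<open>q \<noteq> 0\<close> in auto)
    then have "degree q < degree p" by simp
    show ?thesis
    proof (cases "matrix_poly_apply B q u \<in> Z")
      case True
      show ?thesis by (rule less.hyps[OF \<open>degree q < degree p\<close> \<open>q \<noteq> 0\<close> True])
    next
      case False
      have "matrix_poly_apply B p u = B *v matrix_poly_apply B q u - r *s matrix_poly_apply B q u"
        unfolding q matrix_poly_apply_mult by (rule matrix_poly_apply_linear_factor)
      then have "matrix_poly_apply B q u \<in> eigenspace_mod Z B r"
        using less.prems(2) by (simp add: eigenspace_mod_def)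
      with False show ?thesis
        using matrix_poly_apply_closed[OF U u(1)] by blast
    qed
  qed
qed

lemma eigenvector_mod_exists:
  fixes B :: "complex^'n^'n"
  assumes "vec.subspace Z" "vec.subspace U" "(*v) B ` U \<subseteq> U" "u \<in> U" "u \<notin> Z"
  obtains c w where "w \<in> U" "w \<notin> Z" "w \<in> eigenspace_mod Z B c"
proof -
  obtain p where "p \<noteq> 0" "matrix_poly_apply B p u = 0"
    using annihilating_poly_vector_exists[where B = B] by blast
  then have "\<exists>c. \<exists>w\<in>U. w \<notin> Z \<and> w \<in> eigenspace_mod Z B c"
    using eigenvector_mod_exists_poly[OF assms] vec.subspace_0[OF assms(1)] by simp
  then show ?thesis using that by blast
qed

lemma continuous_map_finite_range_constant:
  fixes f :: "'x \<Rightarrow> 'a::metric_space"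
  assumes "connectedin X K" "continuous_map X euclidean f" "finite (f ` K)" "a \<in> K" "b \<in> K"
  shows "f a = f b"
proof -
  have "connected (f ` K)"
    using connectedin_continuous_map_image[OF assms(2,1)] by simp
  then obtain c where "f ` K = {c}"
    using assms(3,4) connected_finite_iff_sing by blast
  then show ?thesis using assms(4,5) by (metis imageI singletonD)
qed

lemma eigenvalue_mod_continuous_constant:
  fixes f :: "'x \<Rightarrow> complex"
  assumes "connectedin X K" "continuous_map X euclidean f"
    and Z: "vec.subspace Z" "(*v) B ` Z \<subseteq> Z"
    and eigen: "\<And>b. b \<in> K \<Longrightarrow> \<not> eigenspace_mod Z B (f b) \<subseteq> Z"
    and "a \<in> K" "b \<in> K"
  shows "f a = f b"
proof (rule continuous_map_finite_range_constant[OF assms(1,2) _ assms(6,7)])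
  show "finite (f ` K)"
    using eigen by (intro finite_subset[OF _ finite_eigenvalues_mod[OF Z]]) blast
qed

section \<open>Connected topological groups\<close>

locale topgroup = group G for G :: "('g, 'b) monoid_scheme" (structure) +
  fixes T :: "'g topology"
  assumes topological_group: "topological_group G T"
begin

lemma topspace_eq_carrier [simp]: "topspace T = carrier G"
  using topological_group by (simp add: topological_group_def)

lemma continuous_map_mult:
  assumes "continuous_map X T f" "continuous_map X T g"
  shows "continuous_map X T (\<lambda>x. f x \<otimes> g x)"
proof -
  have mult: "continuous_map (prod_topology T T) T (\<lambda>(x, y). x \<otimes> y)"
    using topological_group by (simp add: topological_group_def)
  show ?thesis
    using continuous_map_compose[OF continuous_map_pairedI[OF assms] mult] by (simp add: o_def)
qed

lemma continuous_map_inv: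
  assumes "continuous_map X T f"
  shows "continuous_map X T (\<lambda>x. inv (f x))"
proof -
  have inv: "continuous_map T T (\<lambda>x. inv x)"
    using topological_group by (simp add: topological_group_def)
  show ?thesis
    using continuous_map_compose[OF assms inv] by (simp add: o_def)
qed

lemma subgroup_connected_component_one:
  assumes H: "subgroup H G"
  shows "subgroup (connected_component_of_set (subtopology T H) \<one>) G"
    (is "subgroup ?C G")
proof -
  have CH: "?C \<subseteq> H"
    using connected_component_of_subset_topspace[of "subtopology T H" \<one>] by auto
  have C: "connectedin T ?C"
    using connectedin_connected_component_of[of "subtopology T H" \<one>] by (simp add: connectedin_subtopology)
  have one: "\<one> \<in> ?C"
    using H subgroup.one_closed subgroup.subset by (fastforce simp: connected_component_of_refl)
  have maximal: "S \<subseteq> ?C" if "connectedin T S" "S \<subseteq> H" "\<one> \<in> S" for S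
    using that by (intro connected_component_of_maximal) (auto simp: connectedin_subtopology)
  show ?thesis
  proof (rule subgroupI)
    show "?C \<subseteq> carrier G" using CH subgroup.subset[OF H] by blast
    show "?C \<noteq> {}" using one by blast
  next
    fix a assume a: "a \<in> ?C"
    have "connectedin T ((\<lambda>x. inv x) ` ?C)"
      using connectedin_continuous_map_image[OF continuous_map_inv[OF continuous_map_id] C]
      by (simp add: id_def)
    moreover have "(\<lambda>x. inv x) ` ?C \<subseteq> H" using CH H by (auto intro: subgroup.m_inv_closed)
    moreover have "\<one> \<in> (\<lambda>x. inv x) ` ?C" using one by (metis image_eqI inv_one)
    ultimately have "(\<lambda>x. inv x) ` ?C \<subseteq> ?C" by (rule maximal)
    then show "inv a \<in> ?C" using a by blast
  next
    fix a b assume a: "a \<in> ?C" and b: "b \<in> ?C"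
    have aG: "a \<in> carrier G" using a CH subgroup.subset[OF H] by blast
    have "connectedin T ((\<lambda>x. a \<otimes> x) ` ?C)"
      using connectedin_continuous_map_image[OF continuous_map_mult[OF _ continuous_map_id] C] aG
      by (simp add: id_def)
    moreover have "a \<in> (\<lambda>x. a \<otimes> x) ` ?C" using one aG by (metis image_eqI r_one)
    ultimately have "connectedin T ((\<lambda>x. a \<otimes> x) ` ?C \<union> ?C)"
      using a C by (intro connectedin_Un) blast+
    moreover have "(\<lambda>x. a \<otimes> x) ` ?C \<union> ?C \<subseteq> H" using CH H a by (auto intro: subgroup.m_closed)
    moreover have "\<one> \<in> (\<lambda>x. a \<otimes> x) ` ?C \<union> ?C" using one by blast
    ultimately have "(\<lambda>x. a \<otimes> x) ` ?C \<union> ?C \<subseteq> ?C" by (rule maximal)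
    then show "a \<otimes> b \<in> ?C" using b by blast
  qed
qed

lemma connectedin_derived:
  assumes K: "subgroup K G" "connectedin T K"
  shows "connectedin T (derived G K)"
proof -
  define comm where "comm p = fst p \<otimes> snd p \<otimes> inv (fst p) \<otimes> inv (snd p)" for p
  define C where "C = connected_component_of_set (subtopology T (derived G K)) \<one>"
  have "continuous_map (prod_topology T T) T comm"
    unfolding comm_def
    by (intro continuous_map_mult continuous_map_inv continuous_map_fst continuous_map_snd)
  moreover have "connectedin (prod_topology T T) (K \<times> K)"
    using K(2) by (simp add: connectedin_Times)
  ultimately have "connectedin T (comm ` (K \<times> K))"
    by (rule connectedin_continuous_map_image)
  moreover have "derived_set G K = comm ` (K \<times> K)"
    unfolding comm_def by force
  ultimately have "connectedin T (derived_set G K)"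
    by simp
  moreover have "\<one> \<in> derived_set G K"
    using subgroup.one_closed[OF K(1)] by force
  moreover have "derived_set G K \<subseteq> derived G K"
    unfolding derived_def by (auto intro: generate.incl)
  ultimately have "derived_set G K \<subseteq> C"
    unfolding C_def by (intro connected_component_of_maximal) (auto simp: connectedin_subtopology)
  moreover have "subgroup C G"
    unfolding C_def using derived_is_subgroup subgroup.subset[OF K(1)]
    by (blast intro: subgroup_connected_component_one)
  ultimately have "derived G K \<subseteq> C"
    unfolding derived_def by (rule generate_subgroup_incl)
  moreover have "C \<subseteq> derived G K" "connectedin T C"
    using connected_component_of_subset_topspace[of "subtopology T (derived G K)" \<one>]
      connectedin_connected_component_of[of "subtopology T (derived G K)" \<one>]
    by (auto simp: C_def connectedin_subtopology)
  ultimately show ?thesis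
    by (simp add: subset_antisym)
qed

end

lemma (in group) derived_conj_closed:
  assumes K: "subgroup K G" and a: "a \<in> K" and h: "h \<in> derived G K"
  shows "inv a \<otimes> h \<otimes> a \<in> derived G K"
  using normal.inv_op_closed1[OF derived_subgroup_is_normal[OF K], of a h] a h m_inv_consistent[OF K a]
  by simp

section \<open>A relative Lie--Kolchin theorem\<close>

definition invariant_subspace :: "('g \<Rightarrow> 'a::field^'n^'n) \<Rightarrow> 'g set \<Rightarrow> ('a^'n) set \<Rightarrow> bool" where
  "invariant_subspace \<rho> K Z \<longleftrightarrow> vec.subspace Z \<and> (\<forall>k\<in>K. (*v) (\<rho> k) ` Z \<subseteq> Z)"

definition common_eigenvector_mod ::
  "('g \<Rightarrow> 'a::field^'n^'n) \<Rightarrow> 'g set \<Rightarrow> ('a^'n) set \<Rightarrow> 'a^'n \<Rightarrow> bool" where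
  "common_eigenvector_mod \<rho> K Z w \<longleftrightarrow> w \<notin> Z \<and> (\<forall>k\<in>K. \<exists>c. w \<in> eigenspace_mod Z (\<rho> k) c)"

lemma invariant_subspace_subset:
  "invariant_subspace \<rho> K Z \<Longrightarrow> H \<subseteq> K \<Longrightarrow> invariant_subspace \<rho> H Z"
  by (auto simp: invariant_subspace_def)

lemma invariant_subspace_span_insert:
  assumes Z: "invariant_subspace \<rho> K Z" and w: "common_eigenvector_mod \<rho> K Z w"
  shows "invariant_subspace \<rho> K (vec.span (insert w Z))"
proof -
  have Zs: "vec.subspace Z" and Zinv: "\<And>k. k \<in> K \<Longrightarrow> (*v) (\<rho> k) ` Z \<subseteq> Z"
    using Z by (auto simp: invariant_subspace_def)
  have span_Z: "vec.span Z = Z"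
    using Zs by (simp only: vec.span_eq_iff)
  have span: "vec.span (insert w Z) = {x. \<exists>t. x - t *s w \<in> Z}"
    using vec.span_insert[of w Z] unfolding span_Z .
  have "\<rho> k *v x \<in> vec.span (insert w Z)" if k: "k \<in> K" and x: "x - t *s w \<in> Z" for k x t
  proof -
    obtain c where c: "\<rho> k *v w - c *s w \<in> Z"
      using w k by (auto simp: common_eigenvector_mod_def eigenspace_mod_def)
    have "\<rho> k *v x - (t * c) *s w = \<rho> k *v (x - t *s w) + t *s (\<rho> k *v w - c *s w)"
      by (simp add: vec.diff vec.scale vec.scale_scale vec.scale_right_diff_distrib algebra_simps)
    also have "\<dots> \<in> Z"
      using Zinv[OF k] x c by (blast intro: vec.subspace_add[OF Zs] vec.subspace_scale[OF Zs])
    finally show ?thesis unfolding span by blast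
  qed
  then show ?thesis
    unfolding invariant_subspace_def using vec.subspace_span[of "insert w Z"] by (auto simp: span)
qed

locale continuous_representation = topgroup G T for G :: "('g, 'b) monoid_scheme" (structure) and T +
  fixes \<rho> :: "'g \<Rightarrow> complex^'n^'n"
  assumes hom_GL: "\<rho> \<in> hom G GL"
    and continuous_map_rep: "continuous_map T euclidean \<rho>"
begin

lemma rep_mult: "x \<in> carrier G \<Longrightarrow> y \<in> carrier G \<Longrightarrow> \<rho> (x \<otimes> y) = \<rho> x ** \<rho> y"
  using hom_GL by (simp add: hom_def GL_def)

lemma rep_one: "\<rho> \<one> = mat 1"
proof -
  obtain A where "A ** \<rho> \<one> = mat 1"
    using hom_GL by (force simp: hom_def GL_def Pi_def invertible_def)
  moreover have "\<rho> \<one> = \<rho> \<one> ** \<rho> \<one>"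
    using rep_mult[of \<one> \<one>] by simp
  ultimately show ?thesis
    by (metis matrix_mul_assoc matrix_mul_lid)
qed

lemma rep_inv_cancel: "x \<in> carrier G \<Longrightarrow> \<rho> (inv x) *v (\<rho> x *v v) = v"
  by (simp add: matrix_vector_mul_assoc rep_mult[symmetric] rep_one)

lemma rep_notin_invariant_subspace:
  assumes "subgroup K G" "invariant_subspace \<rho> K Z" "a \<in> K" "w \<notin> Z"
  shows "\<rho> a *v w \<notin> Z"
  using assms rep_inv_cancel[of a w] subgroup.m_inv_closed[OF assms(1,3)] subgroup.subset[OF assms(1)]
  by (force simp: invariant_subspace_def)

lemma conjugate_eigenspace_mod:
  assumes "a \<in> carrier G" "k \<in> carrier G" "(*v) (\<rho> a) ` Z \<subseteq> Z"
    and "u \<in> eigenspace_mod Z (\<rho> (inv a \<otimes> k \<otimes> a)) c"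
  shows "\<rho> a *v u \<in> eigenspace_mod Z (\<rho> k) c"
proof (rule eigenspace_mod_intertwine[OF assms(3) _ assms(4)])
  have "a \<otimes> (inv a \<otimes> k \<otimes> a) = k \<otimes> a"
    using assms(1,2) by (simp add: m_assoc[symmetric])
  then show "\<rho> a ** \<rho> (inv a \<otimes> k \<otimes> a) = \<rho> k ** \<rho> a"
    using assms(1,2) by (simp add: rep_mult[symmetric])
qed

lemma commutator_eigenspace_mod:
  assumes G: "a \<in> carrier G" "g \<in> carrier G"
    and Z: "vec.subspace Z" "(*v) (\<rho> a) ` Z \<subseteq> Z" "(*v) (\<rho> g) ` Z \<subseteq> Z"
    and u: "u \<in> eigenspace_mod Z (\<rho> g) \<theta>"
      "u \<in> eigenspace_mod Z (\<rho> (inv g \<otimes> inv a \<otimes> g \<otimes> a)) c"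
  shows "\<rho> a *v u \<in> eigenspace_mod Z (\<rho> g) (\<theta> * c)"
proof -
  have "u \<in> eigenspace_mod Z (\<rho> g ** \<rho> (inv g \<otimes> inv a \<otimes> g \<otimes> a)) (\<theta> * c)"
    using eigenspace_mod_mult[OF Z(1,3) u] .
  moreover have "\<rho> g ** \<rho> (inv g \<otimes> inv a \<otimes> g \<otimes> a) = \<rho> (inv a \<otimes> g \<otimes> a)"
    using G by (simp add: rep_mult[symmetric] m_assoc[symmetric])
  ultimately show ?thesis
    using conjugate_eigenspace_mod[OF G Z(2)] by simp
qed

text \<open>\<open>\<rho> a\<close> maps the \<open>\<theta>\<close>-eigenspace of \<open>\<rho> g\<close> into the eigenspace for \<open>\<theta> * \<kappa>[g\<inverse>, a\<inverse>]\<close>. This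
  eigenvalue depends continuously on \<open>a\<close> and lies in the finite spectrum of \<open>\<rho> g\<close> modulo \<open>Z\<close>,
  so it equals its value \<open>\<theta>\<close> at \<open>a = \<one>\<close>.\<close>

lemma invariant_subspace_eigenspace_mod:
  assumes K: "subgroup K G" "connectedin T K" and \<kappa>: "continuous_map T euclidean \<kappa>"
    and Z: "invariant_subspace \<rho> K Z" and U: "invariant_subspace \<rho> K U"
    and comm: "\<And>h. h \<in> derived_set G K \<Longrightarrow> U \<subseteq> eigenspace_mod Z (\<rho> h) (\<kappa> h)"
    and g: "g \<in> K" and w: "w \<in> U" "w \<notin> Z" "w \<in> eigenspace_mod Z (\<rho> g) \<theta>"
  shows "invariant_subspace \<rho> K (U \<inter> eigenspace_mod Z (\<rho> g) \<theta>)"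
proof -
  define E where "E = U \<inter> eigenspace_mod Z (\<rho> g) \<theta>"
  define \<mu> where "\<mu> a = \<theta> * \<kappa> (inv g \<otimes> inv a \<otimes> g \<otimes> a)" for a
  have KG: "K \<subseteq> carrier G" using subgroup.subset[OF K(1)] .
  have Zs: "vec.subspace Z" and Zinv: "\<And>k. k \<in> K \<Longrightarrow> (*v) (\<rho> k) ` Z \<subseteq> Z"
    using Z by (auto simp: invariant_subspace_def)
  have Us: "vec.subspace U" and Uinv: "\<And>k. k \<in> K \<Longrightarrow> (*v) (\<rho> k) ` U \<subseteq> U"
    using U by (auto simp: invariant_subspace_def)
  have \<mu>_eigen: "\<rho> a *v u \<in> eigenspace_mod Z (\<rho> g) (\<mu> a)" if a: "a \<in> K" and u: "u \<in> E" for a u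
  proof -
    have aG: "a \<in> carrier G" and gG: "g \<in> carrier G" using a g KG by auto
    define h where "h = inv g \<otimes> inv a \<otimes> g \<otimes> a"
    have "h \<in> derived_set G K"
      using a g K(1) aG gG unfolding h_def
      by (intro UN_I[of "inv g"] UN_I[of "inv a"]) (auto intro: subgroup.m_inv_closed)
    then have "U \<subseteq> eigenspace_mod Z (\<rho> h) (\<kappa> h)"
      by (rule comm)
    then show ?thesis
      using commutator_eigenspace_mod[OF aG gG Zs Zinv[OF a] Zinv[OF g]] u
      by (auto simp: E_def \<mu>_def h_def)
  qed
  have \<kappa>_one: "\<kappa> \<one> = 1"
  proof (rule eigenspace_mod_identity[OF Zs w(2)])
    have "\<one> \<in> derived_set G K"
      using subgroup.one_closed[OF K(1)] by (intro UN_I[of \<one>]) auto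
    then show "w \<in> eigenspace_mod Z (mat 1) (\<kappa> \<one>)"
      using comm w(1) rep_one by force
  qed
  have "continuous_map T T (\<lambda>a. inv g \<otimes> inv a \<otimes> g \<otimes> a)"
    using g KG by (intro continuous_map_mult continuous_map_inv continuous_map_id[unfolded id_def]) auto
  then have "continuous_map T euclidean (\<kappa> \<circ> (\<lambda>a. inv g \<otimes> inv a \<otimes> g \<otimes> a))"
    using \<kappa> by (rule continuous_map_compose)
  moreover have "continuous_map euclidean euclidean (\<lambda>z. \<theta> * z)"
    by (simp add: continuous_map_iff_continuous2 continuous_intros)
  ultimately have "continuous_map T euclidean ((\<lambda>z. \<theta> * z) \<circ> (\<kappa> \<circ> (\<lambda>a. inv g \<otimes> inv a \<otimes> g \<otimes> a)))"
    by (rule continuous_map_compose)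
  then have \<mu>_cont: "continuous_map T euclidean \<mu>"
    by (simp add: \<mu>_def[abs_def] o_def)
  have "\<not> eigenspace_mod Z (\<rho> g) (\<mu> b) \<subseteq> Z" if "b \<in> K" for b
    using \<mu>_eigen[OF that] w rep_notin_invariant_subspace[OF K(1) Z that w(2)] by (auto simp: E_def)
  then have "\<mu> a = \<mu> \<one>" if "a \<in> K" for a
    using eigenvalue_mod_continuous_constant[OF K(2) \<mu>_cont Zs Zinv[OF g]] that subgroup.one_closed[OF K(1)]
    by blast
  moreover have "\<mu> \<one> = \<theta>"
    using g KG \<kappa>_one by (auto simp: \<mu>_def)
  ultimately have "\<rho> a *v u \<in> E" if "a \<in> K" "u \<in> E" for a u
    using \<mu>_eigen[OF that] Uinv[OF that(1)] that by (auto simp: E_def)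
  moreover have "vec.subspace E"
    unfolding E_def by (intro vec.subspace_inter Us subspace_eigenspace_mod Zs)
  ultimately show ?thesis
    by (auto simp: invariant_subspace_def E_def)
qed

lemma proper_invariant_subspace_between:
  assumes K: "subgroup K G" "connectedin T K" and \<kappa>: "continuous_map T euclidean \<kappa>"
    and Z: "invariant_subspace \<rho> K Z" and U: "invariant_subspace \<rho> K U" "Z \<subset> U"
    and comm: "\<And>h. h \<in> derived_set G K \<Longrightarrow> U \<subseteq> eigenspace_mod Z (\<rho> h) (\<kappa> h)"
    and g: "g \<in> K" "\<And>c. \<not> U \<subseteq> eigenspace_mod Z (\<rho> g) c"
  obtains E where "invariant_subspace \<rho> K E" "Z \<subset> E" "E \<subset> U"
proof -
  have Zs: "vec.subspace Z" and Zinv: "(*v) (\<rho> g) ` Z \<subseteq> Z"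
    using Z g by (auto simp: invariant_subspace_def)
  have Us: "vec.subspace U" and Uinv: "(*v) (\<rho> g) ` U \<subseteq> U"
    using U g by (auto simp: invariant_subspace_def)
  obtain u where "u \<in> U" "u \<notin> Z" using U(2) by blast
  then obtain \<theta> w where w: "w \<in> U" "w \<notin> Z" "w \<in> eigenspace_mod Z (\<rho> g) \<theta>"
    using eigenvector_mod_exists[OF Zs Us Uinv] by metis
  show ?thesis
  proof (rule that)
    show "invariant_subspace \<rho> K (U \<inter> eigenspace_mod Z (\<rho> g) \<theta>)"
      by (rule invariant_subspace_eigenspace_mod[OF K \<kappa> Z U(1) comm g(1) w])
    show "Z \<subset> U \<inter> eigenspace_mod Z (\<rho> g) \<theta>"
      using U(2) subset_eigenspace_mod[OF Zs Zinv] w by auto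
    show "U \<inter> eigenspace_mod Z (\<rho> g) \<theta> \<subset> U"
      using g(2)[of \<theta>] by auto
  qed
qed

lemma common_eigenvector_mod_if_commutators_scalar:
  assumes K: "subgroup K G" "connectedin T K" and \<kappa>: "continuous_map T euclidean \<kappa>"
    and Z: "invariant_subspace \<rho> K Z" and U: "invariant_subspace \<rho> K U" "Z \<subset> U"
    and comm: "\<And>h. h \<in> derived_set G K \<Longrightarrow> U \<subseteq> eigenspace_mod Z (\<rho> h) (\<kappa> h)"
  shows "\<exists>w\<in>U. common_eigenvector_mod \<rho> K Z w"
  using U comm
proof (induction "vec.dim U" arbitrary: U rule: less_induct)
  case less
  show ?case
  proof (cases "\<forall>g\<in>K. \<exists>c. U \<subseteq> eigenspace_mod Z (\<rho> g) c")
    case True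
    obtain w where "w \<in> U" "w \<notin> Z" using less.prems(2) by blast
    with True show ?thesis unfolding common_eigenvector_mod_def by blast
  next
    case False
    then obtain g where "g \<in> K" "\<And>c. \<not> U \<subseteq> eigenspace_mod Z (\<rho> g) c" by blast
    then obtain E where E: "invariant_subspace \<rho> K E" "Z \<subset> E" "E \<subset> U"
      using proper_invariant_subspace_between[OF K \<kappa> Z less.prems] by blast
    have "vec.dim E < vec.dim U"
      using subspace_dim_less E(1,3) less.prems(1) by (auto simp: invariant_subspace_def)
    moreover have "\<And>h. h \<in> derived_set G K \<Longrightarrow> E \<subseteq> eigenspace_mod Z (\<rho> h) (\<kappa> h)"
      using less.prems(3) E(3) by blast
    ultimately obtain w where "w \<in> E" "common_eigenvector_mod \<rho> K Z w"
      using less.hyps E(1,2) by blast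
    then show ?thesis using E(3) by blast
  qed
qed

lemma continuous_common_eigenvalue_mod:
  assumes Z: "vec.subspace Z" and w: "common_eigenvector_mod \<rho> H Z w"
  obtains \<kappa> where "continuous_map T euclidean \<kappa>"
    "\<And>k. k \<in> H \<Longrightarrow> w \<in> eigenspace_mod Z (\<rho> k) (\<kappa> k)"
proof -
  have "w \<notin> Z" using w by (simp add: common_eigenvector_mod_def)
  obtain d where d: "\<forall>z\<in>Z. (\<Sum>i\<in>UNIV. z $ i * d i) = 0" "(\<Sum>i\<in>UNIV. w $ i * d i) = 1"
    using separating_functional_exists[OF Z \<open>w \<notin> Z\<close>] by blast
  define \<kappa> where "\<kappa> k = (\<Sum>i\<in>UNIV. (\<rho> k *v w) $ i * d i)" for k
  define \<phi> where "\<phi> A = (\<Sum>i\<in>UNIV. (A *v w) $ i * d i)" for A :: "complex^'n^'n"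
  have "continuous_on UNIV \<phi>"
    unfolding \<phi>_def[abs_def] matrix_vector_mult_def by (simp, intro continuous_intros)
  then have functional: "continuous_map euclidean euclidean \<phi>"
    by (simp add: continuous_map_iff_continuous2)
  have "continuous_map T euclidean \<kappa>"
    using continuous_map_compose[OF continuous_map_rep functional] by (simp add: o_def \<kappa>_def[abs_def] \<phi>_def)
  moreover have "w \<in> eigenspace_mod Z (\<rho> k) (\<kappa> k)" if k: "k \<in> H" for k
  proof -
    obtain c where c: "\<rho> k *v w - c *s w \<in> Z"
      using w k unfolding common_eigenvector_mod_def eigenspace_mod_def by blast
    have functional_diff: "(\<Sum>i\<in>UNIV. (x - c *s y) $ i * d i)
        = (\<Sum>i\<in>UNIV. x $ i * d i) - c * (\<Sum>i\<in>UNIV. y $ i * d i)" for x y :: "complex^'n"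
      by (simp add: algebra_simps sum_subtractf sum_distrib_left)
    have "(\<Sum>i\<in>UNIV. (\<rho> k *v w - c *s w) $ i * d i) = 0"
      using d(1) c by blast
    then have "\<kappa> k - c = 0"
      unfolding functional_diff d(2) \<kappa>_def by simp
    with c show ?thesis by (simp add: eigenspace_mod_def)
  qed
  ultimately show ?thesis by (rule that)
qed

lemma eigenvalue_mod_conj_invariant:
  assumes K: "subgroup K G" "connectedin T K" and Z: "invariant_subspace \<rho> K Z"
    and \<kappa>: "continuous_map T euclidean \<kappa>"
    and w: "w \<notin> Z" "\<And>k. k \<in> derived G K \<Longrightarrow> w \<in> eigenspace_mod Z (\<rho> k) (\<kappa> k)"
    and k: "k \<in> derived G K" and a: "a \<in> K"
  shows "\<kappa> (inv a \<otimes> k \<otimes> a) = \<kappa> k"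
proof -
  have KG: "K \<subseteq> carrier G" using subgroup.subset[OF K(1)] .
  have kK: "k \<in> K" using k derived_incl[OF _ K(1)] by blast
  have Zs: "vec.subspace Z" and Zinv: "\<And>b. b \<in> K \<Longrightarrow> (*v) (\<rho> b) ` Z \<subseteq> Z"
    using Z by (auto simp: invariant_subspace_def)
  have "continuous_map T T (\<lambda>b. inv b \<otimes> k \<otimes> b)"
    using kK KG by (intro continuous_map_mult continuous_map_inv continuous_map_id[unfolded id_def]) auto
  then have cont: "continuous_map T euclidean (\<lambda>b. \<kappa> (inv b \<otimes> k \<otimes> b))"
    using continuous_map_compose[OF _ \<kappa>] by (simp add: o_def)
  have "\<not> eigenspace_mod Z (\<rho> k) (\<kappa> (inv b \<otimes> k \<otimes> b)) \<subseteq> Z" if b: "b \<in> K" for b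
  proof -
    have "w \<in> eigenspace_mod Z (\<rho> (inv b \<otimes> k \<otimes> b)) (\<kappa> (inv b \<otimes> k \<otimes> b))"
      using w(2) derived_conj_closed[OF K(1) b k] .
    then have "\<rho> b *v w \<in> eigenspace_mod Z (\<rho> k) (\<kappa> (inv b \<otimes> k \<otimes> b))"
      using conjugate_eigenspace_mod b kK KG Zinv[OF b] by blast
    then show ?thesis
      using rep_notin_invariant_subspace[OF K(1) Z b w(1)] by blast
  qed
  then have "\<kappa> (inv a \<otimes> k \<otimes> a) = \<kappa> (inv \<one> \<otimes> k \<otimes> \<one>)"
    using eigenvalue_mod_continuous_constant[OF K(2) cont Zs Zinv[OF kK]] a subgroup.one_closed[OF K(1)]
    by blast
  then show ?thesis using kK KG by auto
qed

text \<open>The weight space of \<open>\<kappa>\<close> is \<open>K\<close>-invariant because \<open>\<kappa>\<close> is invariant under conjugation.\<close>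

lemma invariant_weight_space_mod:
  assumes K: "subgroup K G" "connectedin T K"
    and Z: "invariant_subspace \<rho> K Z" and W: "invariant_subspace \<rho> K W" "Z \<subseteq> W"
    and w: "w \<in> W" "common_eigenvector_mod \<rho> (derived G K) Z w"
  obtains \<kappa> U where "continuous_map T euclidean \<kappa>"
    "invariant_subspace \<rho> K U" "Z \<subset> U" "U \<subseteq> W"
    "\<And>h. h \<in> derived_set G K \<Longrightarrow> U \<subseteq> eigenspace_mod Z (\<rho> h) (\<kappa> h)"
proof -
  have KG: "K \<subseteq> carrier G" using subgroup.subset[OF K(1)] .
  have K'K: "derived G K \<subseteq> K" using derived_incl[OF _ K(1)] by blast
  have Zs: "vec.subspace Z" and Zinv: "\<And>k. k \<in> K \<Longrightarrow> (*v) (\<rho> k) ` Z \<subseteq> Z"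
    using Z by (auto simp: invariant_subspace_def)
  have Ws: "vec.subspace W" and Winv: "\<And>k. k \<in> K \<Longrightarrow> (*v) (\<rho> k) ` W \<subseteq> W"
    using W by (auto simp: invariant_subspace_def)
  have w_notin: "w \<notin> Z" using w(2) by (simp add: common_eigenvector_mod_def)
  obtain \<kappa> where \<kappa>: "continuous_map T euclidean \<kappa>"
    and eigen: "\<And>k. k \<in> derived G K \<Longrightarrow> w \<in> eigenspace_mod Z (\<rho> k) (\<kappa> k)"
    using continuous_common_eigenvalue_mod[OF Zs w(2)] by blast
  define U where "U = W \<inter> (\<Inter>k\<in>derived G K. eigenspace_mod Z (\<rho> k) (\<kappa> k))"
  have "vec.subspace U"
    unfolding U_def by (intro vec.subspace_inter Ws vec.subspace_Int subspace_eigenspace_mod Zs)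
  moreover have "\<rho> a *v u \<in> U" if a: "a \<in> K" and u: "u \<in> U" for a u
  proof -
    have "\<rho> a *v u \<in> eigenspace_mod Z (\<rho> k) (\<kappa> k)" if k: "k \<in> derived G K" for k
    proof -
      have "u \<in> eigenspace_mod Z (\<rho> (inv a \<otimes> k \<otimes> a)) (\<kappa> (inv a \<otimes> k \<otimes> a))"
        using u derived_conj_closed[OF K(1) a k] by (auto simp: U_def)
      then have "\<rho> a *v u \<in> eigenspace_mod Z (\<rho> k) (\<kappa> (inv a \<otimes> k \<otimes> a))"
        using conjugate_eigenspace_mod[OF _ _ Zinv[OF a]] a k KG K'K by blast
      then show ?thesis
        using eigenvalue_mod_conj_invariant[OF K Z \<kappa> w_notin eigen k a] by simp
    qed
    then show ?thesis using Winv a u by (auto simp: U_def)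
  qed
  ultimately have "invariant_subspace \<rho> K U"
    by (auto simp: invariant_subspace_def)
  moreover have "Z \<subseteq> U"
    using W(2) subset_eigenspace_mod[OF Zs Zinv] K'K by (auto simp: U_def)
  then have "Z \<subset> U"
    using w(1) eigen w_notin by (auto simp: U_def)
  moreover have "U \<subseteq> W" by (auto simp: U_def)
  moreover have "U \<subseteq> eigenspace_mod Z (\<rho> h) (\<kappa> h)" if "h \<in> derived_set G K" for h
  proof -
    have "h \<in> derived G K" using that unfolding derived_def by (rule generate.incl)
    then show ?thesis by (auto simp: U_def)
  qed
  ultimately show ?thesis by (rule that[OF \<kappa>])
qed

lemma common_eigenvector_mod_exists:
  assumes "subgroup K G" "connectedin T K" "(derived G ^^ d) K = {\<one>}"
    and "invariant_subspace \<rho> K Z" "invariant_subspace \<rho> K W" "Z \<subset> W"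
  shows "\<exists>w\<in>W. common_eigenvector_mod \<rho> K Z w"
  using assms
proof (induction d arbitrary: K)
  case 0
  then have K: "K = {\<one>}" by simp
  obtain w where w: "w \<in> W" "w \<notin> Z" using "0.prems"(6) by blast
  have "w \<in> eigenspace_mod Z (\<rho> \<one>) 1"
    using "0.prems"(4) vec.subspace_0 by (auto simp: eigenspace_mod_def rep_one invariant_subspace_def)
  then show ?case
    using w K unfolding common_eigenvector_mod_def by blast
next
  case (Suc d)
  note K = Suc.prems(1,2)
  have K'K: "derived G K \<subseteq> K" using derived_incl[OF _ K(1)] by blast
  have "subgroup (derived G K) G"
    using derived_is_subgroup subgroup.subset[OF K(1)] by blast
  moreover have "connectedin T (derived G K)"
    using connectedin_derived[OF K] .
  moreover have "(derived G ^^ d) (derived G K) = {\<one>}"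
    using Suc.prems(3) by (simp add: funpow_swap1)
  ultimately obtain w where "w \<in> W" "common_eigenvector_mod \<rho> (derived G K) Z w"
    using Suc.IH[OF _ _ _ invariant_subspace_subset[OF Suc.prems(4) K'K]
      invariant_subspace_subset[OF Suc.prems(5) K'K] Suc.prems(6)] by blast
  then obtain \<kappa> U where \<kappa>: "continuous_map T euclidean \<kappa>"
    and U: "invariant_subspace \<rho> K U" "Z \<subset> U" "U \<subseteq> W"
    and comm: "\<And>h. h \<in> derived_set G K \<Longrightarrow> U \<subseteq> eigenspace_mod Z (\<rho> h) (\<kappa> h)"
    using invariant_weight_space_mod[OF K Suc.prems(4,5)] Suc.prems(6) by blast
  then show ?case
    using common_eigenvector_mod_if_commutators_scalar[OF K \<kappa> Suc.prems(4) U(1,2) comm] by blast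
qed

lemma common_eigenvector_mod_in_universal:
  assumes V: "universal_in G \<rho> UNIV V" "vec.subspace V"
    and Z: "invariant_subspace \<rho> (carrier G) Z" "Z \<subseteq> V"
    and w: "common_eigenvector_mod \<rho> (carrier G) Z w"
  shows "w \<in> V"
proof -
  obtain g where g: "g \<in> carrier G" "\<rho> g *v w \<in> V"
    using V(1) by (auto simp: universal_in_def)
  obtain c where c: "\<rho> g *v w - c *s w \<in> Z"
    using w g(1) unfolding common_eigenvector_mod_def eigenspace_mod_def by blast
  have "c \<noteq> 0"
  proof
    assume "c = 0"
    then have "\<rho> g *v w \<in> Z" using c by simp
    then show False
      using rep_notin_invariant_subspace[OF subgroup_self Z(1) g(1)] w
      by (auto simp: common_eigenvector_mod_def)
  qed
  have "c *s w = \<rho> g *v w - (\<rho> g *v w - c *s w)" by simp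
  also have "\<dots> \<in> V"
    using g(2) c Z(2) by (blast intro: vec.subspace_diff[OF V(2)])
  finally show ?thesis
    using subspace_scale_iff[OF V(2) \<open>c \<noteq> 0\<close>] by blast
qed

lemma universal_subspace_extend:
  assumes "connected_space T" "solvable G"
    and V: "universal_in G \<rho> UNIV V" "vec.subspace V"
    and Z: "invariant_subspace \<rho> (carrier G) Z" "Z \<subseteq> V" "Z \<noteq> UNIV"
  shows "\<exists>Z'. (invariant_subspace \<rho> (carrier G) Z' \<and> Z' \<subseteq> V) \<and> Z \<subset> Z'"
proof -
  obtain d where d: "(derived G ^^ d) (carrier G) = {\<one>}"
    using assms(2) solvable_iff_trivial_derived_seq by blast
  have "connectedin T (carrier G)"
    using assms(1) connectedin_topspace by (metis topspace_eq_carrier)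
  then obtain w where w: "common_eigenvector_mod \<rho> (carrier G) Z w"
    using common_eigenvector_mod_exists[OF subgroup_self _ d Z(1), of UNIV] Z(3)
    by (auto simp: invariant_subspace_def)
  then have "w \<in> V"
    using common_eigenvector_mod_in_universal[OF V Z(1,2)] by blast
  define Z' where "Z' = vec.span (insert w Z)"
  have "invariant_subspace \<rho> (carrier G) Z'"
    unfolding Z'_def using invariant_subspace_span_insert[OF Z(1) w] .
  moreover have "Z' \<subseteq> V"
    unfolding Z'_def using vec.span_minimal[OF _ V(2)] \<open>w \<in> V\<close> Z(2) by blast
  moreover have "Z \<subset> Z'"
    unfolding Z'_def using vec.span_superset[of "insert w Z"] w
    by (auto simp: common_eigenvector_mod_def)
  ultimately show ?thesis by blast
qed

end

theorem proposition5p1: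
  fixes G :: "('g, 'b) monoid_scheme" and T :: "'g topology"
    and \<rho> :: "'g \<Rightarrow> complex^'n^'n" and V :: "(complex^'n) set"
  assumes "topological_group G T"
    and "connected_space T"
    and "solvable G"
    and "\<rho> \<in> hom G GL"
    and "continuous_map T euclidean \<rho>"
    and "vec.subspace V"
    and "universal_in G \<rho> UNIV V"
  shows "V = UNIV"
proof -
  have "group G" using assms(1) by (simp add: topological_group_def)
  then interpret continuous_representation G T \<rho>
    using assms(1,4,5)
    by (intro continuous_representation.intro topgroup.intro topgroup_axioms.intro
        continuous_representation_axioms.intro)
  have "invariant_subspace \<rho> (carrier G) UNIV \<and> UNIV \<subseteq> V"
  proof (rule subspace_chain_reaches_UNIV[where Z = "{0}"])
    fix Z assume "invariant_subspace \<rho> (carrier G) Z \<and> Z \<subseteq> V"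
    then show "vec.subspace Z" by (simp add: invariant_subspace_def)
  next
    fix Z assume "invariant_subspace \<rho> (carrier G) Z \<and> Z \<subseteq> V" "Z \<noteq> UNIV"
    then show "\<exists>Z'. (invariant_subspace \<rho> (carrier G) Z' \<and> Z' \<subseteq> V) \<and> Z \<subset> Z'"
      using universal_subspace_extend[OF assms(2,3,7,6)] by blast
  next
    show "invariant_subspace \<rho> (carrier G) {0} \<and> {0} \<subseteq> V"
      using vec.subspace_0[OF assms(6)] by (simp add: invariant_subspace_def)
  qed
  then show ?thesis by blast
qed

end
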